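(* Let $0<\mu_1<1$, $\lambda_G>0$, set $\mu_2:=\lambda_G$ and $\mu_3:=\frac{\mu_1}{\mu_2(1+2\mu_1)}$, and let $p\ge1$ be an integer. Let $q\le p$ and let $(\mathbf s_i,\mathbf y_i)$, $i=1,\dots,q$, be vectors in $\mathbb{R}^d$ each of which is the output $(\tilde{\mathbf s},\tilde{\mathbf y})$ of the damping procedure $D_{P(I)}D_{LM}$ (with parameters $\mu_1,\mu_2$) applied to some input pair $(\mathbf s,\mathbf y)\neq(0,0)$. Define $H_0:=\lambda_G^{-1}I$ and recursively, with $\rho_i=(\mathbf s_i^\top\mathbf y_i)^{-1}$, $$H_i=(I-\rho_i\mathbf s_i\mathbf y_i^\top)H_{i-1}(I-\rho_i\mathbf y_i\mathbf s_i^\top)+\rho_i\mathbf s_i\mathbf s_i^\top,\quad i=1,\dots,q.$$ Then $\underline\kappa_G I\preceq H_q\preceq\bar\kappa_G I$, where $$\underline\kappa_G:=\Big(\lambda_G+\frac{p}{\mu_3}\Big)^{-1},\qquad \bar\kappa_G:=\lambda_G^{-1}\hat\mu^p+\frac{\hat\mu^p-1}{\hat\mu-1}\cdot\frac1{\mu_2},\qquad \hat\mu:=\Big(1+\frac1{\sqrt{\mu_2\mu_3}}\Big)^2.$$ In particular, the L-BFGS matrices $H_G^l(k)$ built (with memory at most $p$) from such damped pairs are uniformly bounded above and below by positive multiples of the identity, independently of the iteration $k$.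
   Context: $D_{P(I)}D_{LM}$ with parameters $0<\mu_1<1$, $\mu_2>0$ maps $(\mathbf s,\mathbf y)$ to $(\tilde{\mathbf s},\tilde{\mathbf y})$ as follows: $\theta_1:=\frac{(1-\mu_1)\mathbf y^\top\mathbf y/\mu_2}{\mathbf y^\top\mathbf y/\mu_2-\mathbf s^\top\mathbf y}$ if $\mathbf s^\top\mathbf y<\mu_1\mathbf y^\top\mathbf y/\mu_2$ and $\theta_1:=1$ otherwise; $\tilde{\mathbf s}:=\theta_1\mathbf s+(1-\theta_1)\mu_2^{-1}\mathbf y$; $\tilde{\mathbf y}:=\mathbf y+\mu_2\tilde{\mathbf s}$. $\preceq$ denotes the Loewner order on symmetric matrices. *)

theory Defs
  imports "HOL-Analysis.Analysis"
begin

definition loewner_le :: "real^'n^'n \<Rightarrow> real^'n^'n \<Rightarrow> bool" where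
  "loewner_le A B \<longleftrightarrow> (\<forall>x::real^'n. x \<bullet> (A *v x) \<le> x \<bullet> (B *v x))"

definition outer :: "real^'n \<Rightarrow> real^'n \<Rightarrow> real^'n^'n" where
  "outer u v = (\<chi> i j. u $ i * v $ j)"

definition damp_theta :: "real \<Rightarrow> real \<Rightarrow> real^'n \<Rightarrow> real^'n \<Rightarrow> real" where
  "damp_theta mu1 mu2 s y =
     (if s \<bullet> y < mu1 * (y \<bullet> y) / mu2
      then ((1 - mu1) * (y \<bullet> y) / mu2) / ((y \<bullet> y) / mu2 - s \<bullet> y)
      else 1)"

definition damp :: "real \<Rightarrow> real \<Rightarrow> real^'n \<Rightarrow> real^'n \<Rightarrow> (real^'n) \<times> (real^'n)" where
  "damp mu1 mu2 s y =
     (let th = damp_theta mu1 mu2 s y;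
          s' = th *\<^sub>R s + ((1 - th) / mu2) *\<^sub>R y
      in (s', y + mu2 *\<^sub>R s'))"

primrec lbfgs_H :: "real \<Rightarrow> (nat \<Rightarrow> real^'n) \<Rightarrow> (nat \<Rightarrow> real^'n) \<Rightarrow> nat \<Rightarrow> real^'n^'n" where
  "lbfgs_H lamG s y 0 = (1 / lamG) *\<^sub>R mat 1"
| "lbfgs_H lamG s y (Suc i) =
     (let rho = 1 / (s (Suc i) \<bullet> y (Suc i))
      in (mat 1 - rho *\<^sub>R outer (s (Suc i)) (y (Suc i))) ** lbfgs_H lamG s y i
           ** (mat 1 - rho *\<^sub>R outer (y (Suc i)) (s (Suc i)))
         + rho *\<^sub>R outer (s (Suc i)) (s (Suc i)))"

end

theory Submission
  imports Defs
begin

text \<open>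
  The inverse BFGS update with a pair \<open>(s, y)\<close>, \<open>\<rho> = 1/(s\<bullet>y)\<close>, acts on quadratic forms by
  \<open>x\<bullet>H'x = w\<bullet>Hw + \<rho>(s\<bullet>x)\<^sup>2\<close> with \<open>w = x - \<rho>(s\<bullet>x) y\<close>. The damping guarantees
  \<open>\<mu>\<^sub>2|s|\<^sup>2 \<le> s\<bullet>y\<close> and \<open>\<mu>\<^sub>3|y|\<^sup>2 \<le> s\<bullet>y\<close>. Hence, if \<open>|z|\<^sup>2 \<le> L\<cdot>z\<bullet>Hz\<close>, a weighted
  Cauchy-Schwarz inequality gives \<open>|x|\<^sup>2 \<le> (L + 1/\<mu>\<^sub>3)\<cdot>x\<bullet>H'x\<close>; and if \<open>z\<bullet>Hz \<le> c|z|\<^sup>2\<close>,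
  then \<open>|w| \<le> (1 + 1/\<surd>(\<mu>\<^sub>2\<mu>\<^sub>3))|x|\<close> gives \<open>x\<bullet>H'x \<le> (\<hat>\<mu> c + 1/\<mu>\<^sub>2)|x|\<^sup>2\<close>.
  Iterating both estimates at most \<open>p\<close> times from \<open>H\<^sub>0 = \<lambda>\<^sub>G\<^sup>-\<^sup>1I\<close> yields the bounds.
\<close>

lemma outer_mult_vec: "outer u v *v z = (v \<bullet> z) *\<^sub>R (u::real^'n)"
  by (simp add: vec_eq_iff matrix_vector_mult_def outer_def inner_vec_def sum_distrib_left mult_ac)

lemma loewner_le_scaleR_mat_1_left:
  "loewner_le (c *\<^sub>R mat 1) H \<longleftrightarrow> (\<forall>x. c * (x \<bullet> x) \<le> x \<bullet> (H *v x))"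
  by (simp add: loewner_le_def flip: scaleR_matrix_vector_assoc)

lemma loewner_le_scaleR_mat_1_right:
  "loewner_le H (c *\<^sub>R mat 1) \<longleftrightarrow> (\<forall>x. x \<bullet> (H *v x) \<le> c * (x \<bullet> x))"
  by (simp add: loewner_le_def flip: scaleR_matrix_vector_assoc)

lemma square_add_le_weighted:
  fixes a t g L r :: real
  assumes "0 < L" "0 \<le> r"
  shows "(a + r * t * g)^2 \<le> (a^2 / L + r * t^2) * (L + r * g^2)"
proof -
  have "(a^2 / L + r * t^2) * (L + r * g^2) - (a + r * t * g)^2 = r * (a * g - t * L)^2 / L"
    using assms(1) by (simp add: field_simps power2_eq_square)
  also have "\<dots> \<ge> 0" using assms by simp
  finally show ?thesis by simp
qed

lemma le_mult_increase_factor: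
  fixes a L L' Q :: real
  assumes "0 \<le> a" "a \<le> L * Q" "0 < L" "L \<le> L'"
  shows "a \<le> L' * Q"
proof -
  have "0 \<le> Q"
  proof (rule ccontr)
    assume "\<not> 0 \<le> Q"
    hence "L * Q < 0" using assms(3) by (simp add: mult_pos_neg)
    thus False using assms(1,2) by simp
  qed
  thus ?thesis using assms(2,4) by (meson mult_right_mono order_trans)
qed

definition bfgs_update :: "real^'n^'n \<Rightarrow> real^'n \<Rightarrow> real^'n \<Rightarrow> real^'n^'n" where
  "bfgs_update H s y =
     (let rho = 1 / (s \<bullet> y)
      in (mat 1 - rho *\<^sub>R outer s y) ** H ** (mat 1 - rho *\<^sub>R outer y s) + rho *\<^sub>R outer s s)"

lemma lbfgs_H_Suc_eq_bfgs_update: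
  "lbfgs_H lamG s y (Suc i) = bfgs_update (lbfgs_H lamG s y i) (s (Suc i)) (y (Suc i))"
  by (simp add: bfgs_update_def)

definition bounded_curvature_pair :: "real \<Rightarrow> real \<Rightarrow> real^'n \<Rightarrow> real^'n \<Rightarrow> bool" where
  "bounded_curvature_pair mu2 mu3 s y \<longleftrightarrow>
     0 < s \<bullet> y \<and> mu2 * (s \<bullet> s) \<le> s \<bullet> y \<and> mu3 * (y \<bullet> y) \<le> s \<bullet> y"

lemma bfgs_update_quadratic_form:
  fixes H :: "real^'n^'n" and s y x :: "real^'n"
  defines "rho \<equiv> 1 / (s \<bullet> y)"
  defines "w \<equiv> x - (rho * (s \<bullet> x)) *\<^sub>R y"
  shows "x \<bullet> (bfgs_update H s y *v x) = w \<bullet> (H *v w) + rho * (s \<bullet> x)^2"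
proof -
  have "bfgs_update H s y *v x
      = (mat 1 - rho *\<^sub>R outer s y) *v (H *v ((mat 1 - rho *\<^sub>R outer y s) *v x))
        + rho *\<^sub>R (outer s s *v x)"
    by (simp add: bfgs_update_def Let_def rho_def matrix_vector_mult_add_rdistrib
        flip: matrix_vector_mul_assoc scaleR_matrix_vector_assoc)
  also have "(mat 1 - rho *\<^sub>R outer y s) *v x = w"
    by (simp add: w_def algebra_simps outer_mult_vec flip: scaleR_matrix_vector_assoc)
  also have "(mat 1 - rho *\<^sub>R outer s y) *v (H *v w) + rho *\<^sub>R (outer s s *v x)
      = H *v w - (rho * (y \<bullet> (H *v w))) *\<^sub>R s + (rho * (s \<bullet> x)) *\<^sub>R s"
    by (simp add: matrix_vector_mult_diff_rdistrib outer_mult_vec flip: scaleR_matrix_vector_assoc)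
  finally have "x \<bullet> (bfgs_update H s y *v x)
      = x \<bullet> (H *v w) - rho * (y \<bullet> (H *v w)) * (x \<bullet> s) + rho * (s \<bullet> x) * (x \<bullet> s)"
    by (simp add: inner_add_right inner_diff_right)
  also have "\<dots> = w \<bullet> (H *v w) + rho * (s \<bullet> x)^2"
    by (simp add: w_def inner_diff_left inner_commute power2_eq_square algebra_simps)
  finally show ?thesis .
qed

lemma bfgs_update_lower:
  fixes H :: "real^'n^'n"
  assumes "0 < L" "0 < s \<bullet> y" "\<And>z. z \<bullet> z \<le> L * (z \<bullet> (H *v z))"
  shows "x \<bullet> x \<le> (L + (y \<bullet> y) / (s \<bullet> y)) * (x \<bullet> (bfgs_update H s y *v x))"
proof -
  define rho where "rho = 1 / (s \<bullet> y)"
  define t where "t = s \<bullet> x"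
  define w where "w = x - (rho * t) *\<^sub>R y"
  have rho: "0 < rho" using assms(2) by (simp add: rho_def)
  have "norm x = norm (w + (rho * t) *\<^sub>R y)" by (simp add: w_def)
  also have "\<dots> \<le> norm w + rho * \<bar>t\<bar> * norm y"
    using norm_triangle_ineq[of w "(rho * t) *\<^sub>R y"] rho by (simp add: abs_mult)
  finally have "(norm x)^2 \<le> (norm w + rho * \<bar>t\<bar> * norm y)^2"
    by (rule power_mono) simp
  also have "\<dots> \<le> ((norm w)^2 / L + rho * \<bar>t\<bar>^2) * (L + rho * (norm y)^2)"
    using assms(1) rho by (intro square_add_le_weighted) auto
  also have "\<dots> \<le> (w \<bullet> (H *v w) + rho * t^2) * (L + rho * (norm y)^2)"
  proof (rule mult_right_mono)
    show "(norm w)^2 / L + rho * \<bar>t\<bar>^2 \<le> w \<bullet> (H *v w) + rho * t^2"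
      using assms(1) assms(3)[of w] by (simp add: power2_norm_eq_inner pos_divide_le_eq mult.commute)
  qed (use assms(1) rho in simp)
  finally show ?thesis
    by (simp add: bfgs_update_quadratic_form t_def w_def rho_def power2_norm_eq_inner mult.commute)
qed

lemma bfgs_update_upper:
  fixes H :: "real^'n^'n"
  assumes "0 < mu2" "0 < mu3" "0 \<le> c" "bounded_curvature_pair mu2 mu3 s y"
    and "\<And>z. z \<bullet> (H *v z) \<le> c * (z \<bullet> z)"
  shows "x \<bullet> (bfgs_update H s y *v x) \<le> ((1 + 1 / sqrt (mu2 * mu3))^2 * c + 1 / mu2) * (x \<bullet> x)"
proof -
  define rho where "rho = 1 / (s \<bullet> y)"
  define t where "t = s \<bullet> x"
  define w where "w = x - (rho * t) *\<^sub>R y"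
  define r where "r = 1 / sqrt (mu2 * mu3)"
  have rho: "0 < rho" and rs: "rho * (s \<bullet> s) \<le> 1 / mu2" and ry: "rho * (y \<bullet> y) \<le> 1 / mu3"
    using assms(1,2,4) by (auto simp: bounded_curvature_pair_def rho_def field_simps)
  have "(rho * norm s * norm y)^2 = (rho * (s \<bullet> s)) * (rho * (y \<bullet> y))"
    by (simp add: power_mult_distrib flip: power2_norm_eq_inner) (simp add: power2_eq_square)
  also have "\<dots> \<le> (1 / mu2) * (1 / mu3)"
    using rs ry rho assms(1,2) by (intro mult_mono) auto
  finally have "rho * norm s * norm y \<le> sqrt (1 / (mu2 * mu3))"
    by (intro real_le_rsqrt) simp
  hence "rho * norm s * norm y \<le> r"
    by (simp add: r_def real_sqrt_divide)
  have t: "\<bar>t\<bar> \<le> norm s * norm x" unfolding t_def by (rule Cauchy_Schwarz_ineq2)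
  have "norm w \<le> norm x + rho * \<bar>t\<bar> * norm y"
    using norm_triangle_ineq4[of x "(rho * t) *\<^sub>R y"] rho by (simp add: w_def abs_mult)
  also have "\<dots> \<le> norm x + rho * (norm s * norm x) * norm y"
    using t rho by (intro add_left_mono mult_right_mono mult_left_mono) auto
  also have "\<dots> = norm x + (rho * norm s * norm y) * norm x" by (simp add: mult_ac)
  also have "\<dots> \<le> (1 + r) * norm x"
    using mult_right_mono[OF \<open>rho * norm s * norm y \<le> r\<close> norm_ge_zero[of x]]
    by (simp add: algebra_simps)
  finally have "(norm w)^2 \<le> ((1 + r) * norm x)^2"
    by (rule power_mono) simp
  hence "w \<bullet> w \<le> (1 + r)^2 * (x \<bullet> x)"
    by (simp add: power_mult_distrib power2_norm_eq_inner)
  hence "c * (w \<bullet> w) \<le> c * ((1 + r)^2 * (x \<bullet> x))"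
    using assms(3) by (rule mult_left_mono)
  hence Hw: "w \<bullet> (H *v w) \<le> (1 + r)^2 * c * (x \<bullet> x)"
    using assms(5)[of w] by (simp add: mult_ac)
  have "\<bar>t\<bar>^2 \<le> (norm s * norm x)^2" by (rule power_mono[OF t]) simp
  hence "t^2 \<le> (s \<bullet> s) * (x \<bullet> x)" by (simp add: power_mult_distrib power2_norm_eq_inner)
  hence "rho * t^2 \<le> (rho * (s \<bullet> s)) * (x \<bullet> x)"
    using rho by (simp add: mult_left_mono mult.assoc)
  also have "\<dots> \<le> (1 / mu2) * (x \<bullet> x)" using rs by (rule mult_right_mono) simp
  finally show ?thesis
    using Hw by (simp add: bfgs_update_quadratic_form t_def w_def rho_def r_def algebra_simps)
qed

lemma lbfgs_H_lower:
  assumes "0 < lamG" "0 < mu3" "\<forall>i\<in>{1..q}. bounded_curvature_pair mu2 mu3 (s i) (y i)"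
  shows "x \<bullet> x \<le> (lamG + real q / mu3) * (x \<bullet> (lbfgs_H lamG s y q *v x))"
  using assms(3)
proof (induction q arbitrary: x)
  case 0
  show ?case using assms(1) by (simp flip: scaleR_matrix_vector_assoc)
next
  case (Suc q)
  let ?H = "lbfgs_H lamG s y q" and ?s = "s (Suc q)" and ?y = "y (Suc q)"
  have "bounded_curvature_pair mu2 mu3 ?s ?y" using Suc.prems by simp
  hence sy: "0 < ?s \<bullet> ?y" and "(?y \<bullet> ?y) / (?s \<bullet> ?y) \<le> 1 / mu3"
    using assms(2) by (auto simp: bounded_curvature_pair_def field_simps)
  hence L: "lamG + real q / mu3 + (?y \<bullet> ?y) / (?s \<bullet> ?y) \<le> lamG + real (Suc q) / mu3"
    by (simp add: add_divide_distrib)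
  have pos: "0 < lamG + real q / mu3" using assms(1,2) by (simp add: add_pos_nonneg)
  have "x \<bullet> x \<le> (lamG + real q / mu3 + (?y \<bullet> ?y) / (?s \<bullet> ?y))
      * (x \<bullet> (bfgs_update ?H ?s ?y *v x))"
    using Suc.IH Suc.prems by (intro bfgs_update_lower[OF pos sy]) auto
  hence "x \<bullet> x \<le> (lamG + real (Suc q) / mu3) * (x \<bullet> (bfgs_update ?H ?s ?y *v x))"
    by (rule le_mult_increase_factor[OF inner_ge_zero _ _ L])
      (use pos sy in \<open>simp add: add_pos_nonneg\<close>)
  thus ?case unfolding lbfgs_H_Suc_eq_bfgs_update .
qed

lemma lbfgs_H_upper:
  assumes "0 < lamG" "0 < mu2" "0 < mu3"
    and "\<forall>i\<in>{1..q}. bounded_curvature_pair mu2 mu3 (s i) (y i)"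
  defines "muh \<equiv> (1 + 1 / sqrt (mu2 * mu3))^2"
  shows "x \<bullet> (lbfgs_H lamG s y q *v x) \<le> (muh^q / lamG + (\<Sum>j<q. muh^j) / mu2) * (x \<bullet> x)"
  using assms(4)
proof (induction q arbitrary: x)
  case 0
  show ?case by (simp flip: scaleR_matrix_vector_assoc)
next
  case (Suc q)
  have c: "0 \<le> muh^q / lamG + (\<Sum>j<q. muh^j) / mu2"
    using assms(1,2) by (simp add: muh_def sum_nonneg)
  have geometric_step: "(\<Sum>j<Suc q. muh^j) = 1 + muh * (\<Sum>j<q. muh^j)"
    by (simp only: sum.lessThan_Suc_shift power_0 power_Suc sum_distrib_left)
  have "x \<bullet> (lbfgs_H lamG s y (Suc q) *v x)
      \<le> ((1 + 1 / sqrt (mu2 * mu3))^2 * (muh^q / lamG + (\<Sum>j<q. muh^j) / mu2) + 1 / mu2) * (x \<bullet> x)"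
    unfolding lbfgs_H_Suc_eq_bfgs_update
    by (rule bfgs_update_upper[OF assms(2,3) c]) (use Suc in auto)
  also have "(1 + 1 / sqrt (mu2 * mu3))^2 * (muh^q / lamG + (\<Sum>j<q. muh^j) / mu2) + 1 / mu2
      = muh^Suc q / lamG + (\<Sum>j<Suc q. muh^j) / mu2"
    using geometric_step by (simp add: muh_def[symmetric] add_divide_distrib algebra_simps)
  finally show ?case .
qed

lemma damp_fst_inner:
  fixes s0 y0 :: "real^'n"
  assumes "0 < mu1" "mu1 < 1" "0 < mu2" "(s0, y0) \<noteq> (0, 0)"
  shows "fst (damp mu1 mu2 s0 y0) \<noteq> 0"
    and "mu1 * (y0 \<bullet> y0) \<le> mu2 * (fst (damp mu1 mu2 s0 y0) \<bullet> y0)"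
proof -
  define th where "th = damp_theta mu1 mu2 s0 y0"
  define s' where "s' = fst (damp mu1 mu2 s0 y0)"
  define a where "a = (y0 \<bullet> y0) / mu2"
  have s': "s' = th *\<^sub>R s0 + ((1 - th) / mu2) *\<^sub>R y0"
    by (simp add: s'_def th_def damp_def Let_def)
  have "s' \<noteq> 0 \<and> mu1 * a \<le> s' \<bullet> y0"
  proof (cases "s0 \<bullet> y0 < mu1 * a")
    case True
    hence "y0 \<noteq> 0" by (auto simp: a_def)
    hence "0 < a" using assms(3) by (simp add: a_def)
    moreover have "mu1 * a < 1 * a"
      using \<open>0 < a\<close> assms(2) by (intro mult_strict_right_mono)
    hence "s0 \<bullet> y0 < a" using True by simp
    \<comment> \<open>this choice of \<open>\<theta>\<close> makes the damped pair satisfy the curvature condition with equality\<close>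
    ultimately have "th * (a - s0 \<bullet> y0) = (1 - mu1) * a"
      using True by (simp add: th_def damp_theta_def a_def mult.assoc)
    have "s' \<bullet> y0 = th * (s0 \<bullet> y0) + (1 - th) * a"
      using assms(3) by (simp add: s' inner_add_left a_def)
    also have "\<dots> = a - th * (a - s0 \<bullet> y0)" by (simp add: algebra_simps)
    finally have "s' \<bullet> y0 = mu1 * a"
      using \<open>th * (a - s0 \<bullet> y0) = (1 - mu1) * a\<close> by (simp add: algebra_simps)
    thus ?thesis using \<open>0 < a\<close> assms(1) by auto
  next
    case False
    hence "s' = s0" by (simp add: s' th_def damp_theta_def a_def mult.assoc)
    thus ?thesis using False assms(1,3,4) by (auto simp: a_def)
  qed
  thus "s' \<noteq> 0" "mu1 * (y0 \<bullet> y0) \<le> mu2 * (s' \<bullet> y0)"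
    using assms(3) by (auto simp: a_def field_simps)
qed

lemma damp_bounded_curvature_pair:
  fixes s0 y0 :: "real^'n"
  assumes "0 < mu1" "mu1 < 1" "0 < mu2" "(s0, y0) \<noteq> (0, 0)" "damp mu1 mu2 s0 y0 = (s, y)"
  shows "bounded_curvature_pair mu2 (mu1 / (mu2 * (1 + 2 * mu1))) s y"
proof -
  have s: "s \<noteq> 0" and sy0: "mu1 * (y0 \<bullet> y0) \<le> mu2 * (s \<bullet> y0)"
    using damp_fst_inner[OF assms(1-4)] assms(5) by simp_all
  have y: "y = y0 + mu2 *\<^sub>R s"
    using assms(5) by (auto simp: damp_def Let_def)
  have "0 \<le> mu2 * (s \<bullet> y0)"
    using sy0 assms(1) by (meson inner_ge_zero mult_nonneg_nonneg order_trans less_imp_le)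
  hence sy0_nonneg: "0 \<le> s \<bullet> y0" using assms(3) by (simp add: zero_le_mult_iff)
  have ss: "0 < s \<bullet> s" using s by simp
  have sy: "s \<bullet> y = s \<bullet> y0 + mu2 * (s \<bullet> s)"
    by (simp add: y inner_add_right)
  have "mu1 * (y \<bullet> y) = mu1 * (y0 \<bullet> y0) + 2 * mu1 * mu2 * (s \<bullet> y0) + mu1 * mu2^2 * (s \<bullet> s)"
    by (simp add: y inner_add_left inner_add_right inner_commute power2_eq_square algebra_simps)
  also have "\<dots> \<le> mu2 * (s \<bullet> y0) + 2 * mu1 * mu2 * (s \<bullet> y0) + (1 + 2 * mu1) * mu2^2 * (s \<bullet> s)"
    using sy0 mult_right_mono[of mu1 "1 + 2 * mu1" "mu2^2 * (s \<bullet> s)"] ss assms(1)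
    by (simp add: mult.assoc)
  also have "\<dots> = mu2 * (1 + 2 * mu1) * (s \<bullet> y)"
    by (simp add: sy power2_eq_square algebra_simps)
  finally have "mu1 * (y \<bullet> y) \<le> (s \<bullet> y) * (mu2 * (1 + 2 * mu1))" by (simp add: mult.commute)
  moreover have "0 < mu2 * (1 + 2 * mu1)" using assms(1,3) by simp
  ultimately have "mu1 / (mu2 * (1 + 2 * mu1)) * (y \<bullet> y) \<le> s \<bullet> y"
    by (simp add: pos_divide_le_eq)
  moreover have "0 < s \<bullet> y" using sy0_nonneg ss assms(3) by (simp add: sy add_nonneg_pos)
  moreover have "mu2 * (s \<bullet> s) \<le> s \<bullet> y" using sy0_nonneg by (simp add: sy)
  ultimately show ?thesis by (simp add: bounded_curvature_pair_def)
qed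

lemma lbfgs_H_loewner_lower:
  assumes "0 < lamG" "0 < mu3" "q \<le> p"
    and "\<forall>i\<in>{1..q}. bounded_curvature_pair mu2 mu3 (s i) (y i)"
  shows "loewner_le ((1 / (lamG + real p / mu3)) *\<^sub>R mat 1) (lbfgs_H lamG s y q)"
proof -
  have "0 < lamG + real q / mu3" using assms(1,2) by (simp add: add_pos_nonneg)
  moreover have "lamG + real q / mu3 \<le> lamG + real p / mu3"
    using assms(2,3) by (simp add: divide_right_mono)
  ultimately have "x \<bullet> x \<le> (lamG + real p / mu3) * (x \<bullet> (lbfgs_H lamG s y q *v x))" for x
    by (rule le_mult_increase_factor[OF inner_ge_zero lbfgs_H_lower[OF assms(1,2,4)]])
  moreover have "0 < lamG + real p / mu3" using assms(1,2) by (simp add: add_pos_nonneg)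
  ultimately show ?thesis
    by (simp add: loewner_le_scaleR_mat_1_left pos_divide_le_eq mult.commute)
qed

lemma lbfgs_H_loewner_upper:
  assumes "0 < lamG" "0 < mu2" "0 < mu3" "q \<le> p"
    and "\<forall>i\<in>{1..q}. bounded_curvature_pair mu2 mu3 (s i) (y i)"
  defines "muh \<equiv> (1 + 1 / sqrt (mu2 * mu3))^2"
  shows "loewner_le (lbfgs_H lamG s y q)
           (((1 / lamG) * muh ^ p + (muh ^ p - 1) / (muh - 1) * (1 / mu2)) *\<^sub>R mat 1)"
proof -
  have muh: "1 < muh" using assms(2,3) by (simp add: muh_def one_less_power)
  have "muh^q / lamG + (\<Sum>j<q. muh^j) / mu2 \<le> muh^p / lamG + (\<Sum>j<p. muh^j) / mu2"
    using muh assms(1,2,4) by (intro add_mono divide_right_mono sum_mono2 power_increasing) auto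
  also have "\<dots> = (1 / lamG) * muh ^ p + (muh ^ p - 1) / (muh - 1) * (1 / mu2)"
    using muh by (simp add: geometric_sum)
  finally have bound: "muh^q / lamG + (\<Sum>j<q. muh^j) / mu2
      \<le> (1 / lamG) * muh ^ p + (muh ^ p - 1) / (muh - 1) * (1 / mu2)" .
  show ?thesis
    unfolding loewner_le_scaleR_mat_1_right
    using order_trans[OF lbfgs_H_upper[OF assms(1-3,5), folded muh_def]
        mult_right_mono[OF bound inner_ge_zero]] by blast
qed

theorem lemma3:
  fixes mu1 lamG :: real and p q :: nat and s y :: "nat \<Rightarrow> real^'n"
  assumes "0 < mu1" and "mu1 < 1" and "0 < lamG" and "1 \<le> p" and "q \<le> p"
    and "\<forall>i\<in>{1..q}. \<exists>s0 y0. (s0, y0) \<noteq> (0, 0) \<and> (s i, y i) = damp mu1 lamG s0 y0"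
  shows "let mu2 = lamG;
             mu3 = mu1 / (mu2 * (1 + 2 * mu1));
             muh = (1 + 1 / sqrt (mu2 * mu3))^2;
             klow = 1 / (lamG + real p / mu3);
             kup = (1 / lamG) * muh ^ p + (muh ^ p - 1) / (muh - 1) * (1 / mu2)
         in loewner_le (klow *\<^sub>R mat 1) (lbfgs_H lamG s y q)
            \<and> loewner_le (lbfgs_H lamG s y q) (kup *\<^sub>R mat 1)"
proof -
  define mu3 where "mu3 = mu1 / (lamG * (1 + 2 * mu1))"
  have mu3: "0 < mu3" using assms(1,3) by (simp add: mu3_def)
  have pairs: "\<forall>i\<in>{1..q}. bounded_curvature_pair lamG mu3 (s i) (y i)"
  proof
    fix i assume i: "i \<in> {1..q}"
    obtain s0 y0 where "(s0, y0) \<noteq> (0, 0)" "(s i, y i) = damp mu1 lamG s0 y0"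
      using bspec[OF assms(6) i] by blast
    thus "bounded_curvature_pair lamG mu3 (s i) (y i)"
      unfolding mu3_def by (intro damp_bounded_curvature_pair[OF assms(1-3)]) simp_all
  qed
  show ?thesis
    unfolding Let_def mu3_def[symmetric]
    using lbfgs_H_loewner_lower[OF assms(3) mu3 assms(5) pairs]
      lbfgs_H_loewner_upper[OF assms(3,3) mu3 assms(5) pairs] by blast
qed

end
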